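(* Let $\mathscr Q_n$ be a non-singular quadric in $\mathrm{PG}(n,2)$ of projective index $g\ge1$, let $0\le s<g$, let $\alpha_s$ be an $s$-dimensional subspace contained in $\mathscr Q_n$, and let $\Gamma_s$ be the graph constructed from $\alpha_s$ as described below. If $\mathcal C$ is a clique of $\Gamma_s$ with exactly $2^{g+1}-1$ vertices, then $\mathcal C$ is a $g$-clique of Class A or of Class B.
   Context: A non-singular quadric $\mathscr Q_n$ in $\mathrm{PG}(n,2)$ is the point set of a non-degenerate quadric; its projective index $g$ is the largest dimension of a projective subspace contained in $\mathscr Q_n$, and the $g$-dimensional subspaces contained in $\mathscr Q_n$ are its generators. The point-graph $\Gamma$ has vertex set the points of $\mathscr Q_n$, two distinct points adjacent iff the line joining them is contained in $\mathscr Q_n$. A point $X$ of $\mathscr Q_n$ has type (i) if $X\in\alpha_s$; type (ii) if $X\notin\alpha_s$ and $\langle\alpha_s,X\rangle\subseteq\mathscr Q_n$; type (iii) otherwise. Let $\mathcal X_s$ be the type (ii) points and $\mathcal Y_s$ the points of type (i) or (iii). The graph $\Gamma_s$ has the same vertex set as $\Gamma$ and the same edges, except that for each vertex $R\in\mathcal Y_s$ having exactly $\frac12|\mathcal X_s|$ neighbours in $\mathcal X_s$ (in $\Gamma$), those edges are deleted and $R$ is joined instead to the other $\frac12|\mathcal X_s|$ vertices of $\mathcal X_s$. A $g$-clique of Class A is the point set of a generator of $\mathscr Q_n$ containing $\alpha_s$. A $g$-clique of Class B is a set $(\alpha_s\cap\Pi)\cup(\Sigma\setminus(\alpha_s\cup\Pi))\cup(\Pi\setminus\Sigma)$,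 where $\Sigma,\Pi$ are generators of $\mathscr Q_n$ with $\alpha_s\subseteq\Sigma$, $\alpha_s\not\subseteq\Pi$, and $\Sigma\cap\Pi$ of dimension $g-1$. *)

theory Defs
  imports Main "HOL-Library.Z2"
begin

text \<open>PG(n,2): vectors of GF(2)^(n+1) are functions nat => bit supported in {0..n};
  since the only nonzero scalar is 1, projective points are exactly the nonzero vectors.\<close>

definition vadd :: "(nat \<Rightarrow> bit) \<Rightarrow> (nat \<Rightarrow> bit) \<Rightarrow> (nat \<Rightarrow> bit)" where
  "vadd x y = (\<lambda>i. x i + y i)"

definition vecs :: "nat \<Rightarrow> (nat \<Rightarrow> bit) set" where
  "vecs n = {x. \<forall>i>n. x i = 0}"

definition points :: "nat \<Rightarrow> (nat \<Rightarrow> bit) set" where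
  "points n = vecs n - {(\<lambda>_. 0)}"

definition qform :: "nat \<Rightarrow> (nat \<Rightarrow> nat \<Rightarrow> bit) \<Rightarrow> (nat \<Rightarrow> bit) \<Rightarrow> bit" where
  "qform n a x = (\<Sum>i\<in>{0..n}. \<Sum>j\<in>{i..n}. a i j * x i * x j)"

definition quadric :: "nat \<Rightarrow> (nat \<Rightarrow> nat \<Rightarrow> bit) \<Rightarrow> (nat \<Rightarrow> bit) set" where
  "quadric n a = {x \<in> points n. qform n a x = 0}"

definition bform :: "nat \<Rightarrow> (nat \<Rightarrow> nat \<Rightarrow> bit) \<Rightarrow> (nat \<Rightarrow> bit) \<Rightarrow> (nat \<Rightarrow> bit) \<Rightarrow> bit" where
  "bform n a x y = qform n a (vadd x y) - qform n a x - qform n a y"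

definition nonsingular :: "nat \<Rightarrow> (nat \<Rightarrow> nat \<Rightarrow> bit) \<Rightarrow> bool" where
  "nonsingular n a \<longleftrightarrow> \<not> (\<exists>P \<in> quadric n a. \<forall>y \<in> vecs n. bform n a P y = 0)"

text \<open>Projective subspaces of PG(n,2) as point sets: sets of points which together with the
  zero vector form a linear subspace (over GF(2): closed under addition).\<close>
definition is_subspace :: "nat \<Rightarrow> (nat \<Rightarrow> bit) set \<Rightarrow> bool" where
  "is_subspace n S \<longleftrightarrow> S \<subseteq> points n \<and> (\<forall>x\<in>S. \<forall>y\<in>S. x \<noteq> y \<longrightarrow> vadd x y \<in> S)"

text \<open>A projective subspace of dimension d has exactly 2^(d+1)-1 points over GF(2).\<close>
definition subspace_dim :: "nat \<Rightarrow> (nat \<Rightarrow> bit) set \<Rightarrow> nat \<Rightarrow> bool" where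
  "subspace_dim n S d \<longleftrightarrow> is_subspace n S \<and> card S = 2 ^ (d + 1) - 1"

definition pspan :: "nat \<Rightarrow> (nat \<Rightarrow> bit) set \<Rightarrow> (nat \<Rightarrow> bit) set" where
  "pspan n A = \<Inter> {S. is_subspace n S \<and> A \<subseteq> S}"

definition proj_index :: "nat \<Rightarrow> (nat \<Rightarrow> nat \<Rightarrow> bit) \<Rightarrow> nat \<Rightarrow> bool" where
  "proj_index n a g \<longleftrightarrow>
     (\<exists>S. subspace_dim n S g \<and> S \<subseteq> quadric n a) \<and>
     (\<forall>S d. subspace_dim n S d \<and> S \<subseteq> quadric n a \<longrightarrow> d \<le> g)"

definition generator :: "nat \<Rightarrow> (nat \<Rightarrow> nat \<Rightarrow> bit) \<Rightarrow> nat \<Rightarrow> (nat \<Rightarrow> bit) set \<Rightarrow> bool" where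
  "generator n a g S \<longleftrightarrow> subspace_dim n S g \<and> S \<subseteq> quadric n a"

definition adj :: "nat \<Rightarrow> (nat \<Rightarrow> nat \<Rightarrow> bit) \<Rightarrow> (nat \<Rightarrow> bit) \<Rightarrow> (nat \<Rightarrow> bit) \<Rightarrow> bool" where
  "adj n a X Y \<longleftrightarrow> X \<in> quadric n a \<and> Y \<in> quadric n a \<and> X \<noteq> Y \<and>
      pspan n {X, Y} \<subseteq> quadric n a"

definition Xs :: "nat \<Rightarrow> (nat \<Rightarrow> nat \<Rightarrow> bit) \<Rightarrow> (nat \<Rightarrow> bit) set \<Rightarrow> (nat \<Rightarrow> bit) set" where
  "Xs n a \<alpha> = {X \<in> quadric n a. X \<notin> \<alpha> \<and> pspan n (insert X \<alpha>) \<subseteq> quadric n a}"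

definition Ys :: "nat \<Rightarrow> (nat \<Rightarrow> nat \<Rightarrow> bit) \<Rightarrow> (nat \<Rightarrow> bit) set \<Rightarrow> (nat \<Rightarrow> bit) set" where
  "Ys n a \<alpha> = quadric n a - Xs n a \<alpha>"

definition switched :: "nat \<Rightarrow> (nat \<Rightarrow> nat \<Rightarrow> bit) \<Rightarrow> (nat \<Rightarrow> bit) set \<Rightarrow> (nat \<Rightarrow> bit) \<Rightarrow> bool" where
  "switched n a \<alpha> R \<longleftrightarrow> R \<in> Ys n a \<alpha> \<and>
     2 * card {X \<in> Xs n a \<alpha>. adj n a R X} = card (Xs n a \<alpha>)"

definition adj_s :: "nat \<Rightarrow> (nat \<Rightarrow> nat \<Rightarrow> bit) \<Rightarrow> (nat \<Rightarrow> bit) set \<Rightarrow> (nat \<Rightarrow> bit) \<Rightarrow> (nat \<Rightarrow> bit) \<Rightarrow> bool" where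
  "adj_s n a \<alpha> U V \<longleftrightarrow>
     (if switched n a \<alpha> U \<and> V \<in> Xs n a \<alpha> then U \<noteq> V \<and> \<not> adj n a U V
      else if switched n a \<alpha> V \<and> U \<in> Xs n a \<alpha> then U \<noteq> V \<and> \<not> adj n a U V
      else adj n a U V)"

definition clique_s :: "nat \<Rightarrow> (nat \<Rightarrow> nat \<Rightarrow> bit) \<Rightarrow> (nat \<Rightarrow> bit) set \<Rightarrow> (nat \<Rightarrow> bit) set \<Rightarrow> bool" where
  "clique_s n a \<alpha> C \<longleftrightarrow> C \<subseteq> quadric n a \<and>
     (\<forall>U\<in>C. \<forall>V\<in>C. U \<noteq> V \<longrightarrow> adj_s n a \<alpha> U V)"

definition classA :: "nat \<Rightarrow> (nat \<Rightarrow> nat \<Rightarrow> bit) \<Rightarrow> nat \<Rightarrow> (nat \<Rightarrow> bit) set \<Rightarrow> (nat \<Rightarrow> bit) set \<Rightarrow> bool" where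
  "classA n a g \<alpha> C \<longleftrightarrow> generator n a g C \<and> \<alpha> \<subseteq> C"

definition classB :: "nat \<Rightarrow> (nat \<Rightarrow> nat \<Rightarrow> bit) \<Rightarrow> nat \<Rightarrow> (nat \<Rightarrow> bit) set \<Rightarrow> (nat \<Rightarrow> bit) set \<Rightarrow> bool" where
  "classB n a g \<alpha> C \<longleftrightarrow> (\<exists>\<Sigma> \<Pi>. generator n a g \<Sigma> \<and> generator n a g \<Pi> \<and>
     \<alpha> \<subseteq> \<Sigma> \<and> \<not> \<alpha> \<subseteq> \<Pi> \<and> subspace_dim n (\<Sigma> \<inter> \<Pi>) (g - 1) \<and>
     C = (\<alpha> \<inter> \<Pi>) \<union> (\<Sigma> - (\<alpha> \<union> \<Pi>)) \<union> (\<Pi> - \<Sigma>))"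

end

theory Submission
  imports Defs "HOL-Library.Function_Algebras"
begin

text \<open>
  In a clique of \<Gamma>_s two points are orthogonal, except that a type (ii) and a type (iii)
  point have B = 1: the switched vertices are exactly the points of type (iii), because
  translation by a point c of \<alpha> with B R c = 1 exchanges the neighbours and non-neighbours of R
  in X_s. Totally singular subspaces have at most 2^(g+1) vectors, so a clique of 2^(g+1) - 1
  points spanning a totally singular subspace is a generator.

  Without type (iii) points, C \<union> \<alpha> is totally singular, so C is a generator containing \<alpha>
  (Class A). Type (iii) points force type (ii) points: otherwise C is a generator whose part
  orthogonal to \<alpha> lies in \<alpha>, which a duality count rules out. In the mixed case fix X0 of type
  (ii); translating the type (ii) points by X0 makes the clique totally singular, and it spans the
  generator \<Pi>. Counting inside \<Pi>, its hyperplane orthogonal to X0 and its subspace G orthogonal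
  to \<alpha> shows that X0 is orthogonal to G and that X0 + a \<in> G for some a \<in> \<alpha>; then
  \<Sigma> = \<langle>a, G\<rangle> is a generator through \<alpha> meeting \<Pi> in G, and C has the shape of Class B.
\<close>

(* Keep + and * on bit as field operations rather than xor and and. *)
declare add_bit_eq_xor [simp del] mult_bit_eq_and [simp del]

type_synonym vec = "nat \<Rightarrow> bit"

lemma card_add_le_of_disjoint:
  "finite S \<Longrightarrow> A \<subseteq> S \<Longrightarrow> B \<subseteq> S \<Longrightarrow> A \<inter> B = {} \<Longrightarrow> card A + card B \<le> card S"
  by (metis card_Un_disjoint card_mono finite_subset le_sup_iff)

lemma card_add_one_le:
  "finite L \<Longrightarrow> x \<in> L \<Longrightarrow> A \<subseteq> L \<Longrightarrow> x \<notin> A \<Longrightarrow> card A + 1 \<le> card L"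
  by (metis Suc_eq_plus1 card_insert_disjoint card_mono finite_subset insert_subset)

lemma bit_zero_or_one: "(x::bit) = 0 \<or> x = 1"
  using bit_not_zero_iff by blast

lemma bit_add_self [simp]: "(x::bit) + x = 0"
  using bit_zero_or_one[of x] by auto

lemma bit_diff_eq_add [simp]: "(x::bit) - y = x + y"
  using bit_zero_or_one[of x] bit_zero_or_one[of y] by auto

lemma vec_add_self [simp]: "(x::vec) + x = 0"
  by (rule ext) (simp add: plus_fun_def)

lemma vec_add_cancel_left [simp]: "(x::vec) + (x + y) = y"
  by (simp add: add.assoc[symmetric])

lemma vec_add_eq_0_iff: "(x::vec) + y = 0 \<longleftrightarrow> x = y"
  by (metis vec_add_cancel_left add_0_right vec_add_self)

lemma vadd_eq_plus: "vadd x y = x + y"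
  by (simp add: vadd_def plus_fun_def)

lemma qform_add_expand:
  "qform n cf (x + y) = qform n cf x + qform n cf y
     + (\<Sum>i\<in>{0..n}. \<Sum>j\<in>{i..n}. cf i j * (x i * y j + y i * x j))"
  unfolding qform_def by (simp add: plus_fun_def algebra_simps sum.distrib)

lemma bform_expand:
  "bform n cf x y = (\<Sum>i\<in>{0..n}. \<Sum>j\<in>{i..n}. cf i j * (x i * y j + y i * x j))"
  unfolding bform_def vadd_eq_plus qform_add_expand by (simp add: algebra_simps del: bit_diff_eq_add)

lemma qform_add: "qform n cf (x + y) = qform n cf x + qform n cf y + bform n cf x y"
  by (simp add: qform_add_expand bform_expand)

lemma bform_commute: "bform n cf x y = bform n cf y x"
  unfolding bform_expand by (simp add: algebra_simps)

lemma bform_add_right: "bform n cf x (y + z) = bform n cf x y + bform n cf x z"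
  unfolding bform_expand by (simp add: plus_fun_def algebra_simps sum.distrib)

lemma bform_add_left: "bform n cf (x + y) z = bform n cf x z + bform n cf y z"
  using bform_add_right bform_commute by metis

lemma bform_zero_left [simp]: "bform n cf 0 x = 0"
  unfolding bform_expand by simp

lemma bform_zero_right [simp]: "bform n cf x 0 = 0"
  unfolding bform_expand by simp

lemma qform_zero [simp]: "qform n cf 0 = 0"
  unfolding qform_def by simp

lemma bform_self [simp]: "bform n cf x x = 0"
proof -
  have "\<And>u v::bit. u * (v + v) = 0" by simp
  then show ?thesis unfolding bform_expand by (simp add: mult.commute)
qed

subsection \<open>Linear subspaces over GF(2)\<close>

definition lsubspace :: "vec set \<Rightarrow> bool" where
  "lsubspace L \<longleftrightarrow> 0 \<in> L \<and> (\<forall>x\<in>L. \<forall>y\<in>L. x + y \<in> L)"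

definition lspan :: "vec set \<Rightarrow> vec set" where
  "lspan F = \<Inter> {L. lsubspace L \<and> F \<subseteq> L}"

lemma lsubspace_0: "lsubspace L \<Longrightarrow> 0 \<in> L"
  by (simp add: lsubspace_def)

lemma lsubspace_add: "lsubspace L \<Longrightarrow> x \<in> L \<Longrightarrow> y \<in> L \<Longrightarrow> x + y \<in> L"
  by (simp add: lsubspace_def)

lemma lsubspace_add_iff: "lsubspace L \<Longrightarrow> x \<in> L \<Longrightarrow> x + y \<in> L \<longleftrightarrow> y \<in> L"
  by (metis vec_add_cancel_left lsubspace_add)

lemma lsubspace_Int: "lsubspace A \<Longrightarrow> lsubspace B \<Longrightarrow> lsubspace (A \<inter> B)"
  unfolding lsubspace_def by blast

lemma lsubspace_lspan: "lsubspace (lspan F)"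
  unfolding lspan_def lsubspace_def by blast

lemma lspan_superset: "F \<subseteq> lspan F"
  unfolding lspan_def by blast

lemma lspan_least: "lsubspace L \<Longrightarrow> F \<subseteq> L \<Longrightarrow> lspan F \<subseteq> L"
  unfolding lspan_def by blast

lemma lspan_eq: "lsubspace L \<Longrightarrow> lspan L = L"
  using lspan_least lspan_superset by blast

lemma lspan_mono: "F \<subseteq> F' \<Longrightarrow> lspan F \<subseteq> lspan F'"
  using lspan_least lspan_superset lsubspace_lspan by (meson order_trans)

lemma lspan_empty: "lspan {} = {0}"
proof -
  have "lsubspace {0}" by (simp add: lsubspace_def)
  then have "lspan {} \<subseteq> {0}" by (rule lspan_least) simp
  then show ?thesis using lsubspace_0[OF lsubspace_lspan] by auto
qed

lemma lspan_insert: "lspan (insert x F) = lspan F \<union> (\<lambda>y. x + y) ` lspan F"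
proof
  let ?R = "lspan F \<union> (\<lambda>y. x + y) ` lspan F"
  have sums: "u + v \<in> ?R" if "u \<in> ?R" "v \<in> ?R" for u v
  proof -
    have "\<And>p q. (x + p) + (x + q) = p + q" "\<And>p q. p + (x + q) = x + (p + q)"
      "\<And>p q. (x + p) + q = x + (p + q)"
      by (simp_all add: algebra_simps)
    with that lsubspace_add[OF lsubspace_lspan] show ?thesis by fastforce
  qed
  have "lsubspace ?R"
    unfolding lsubspace_def using sums lsubspace_0[OF lsubspace_lspan] by blast
  moreover have "insert x F \<subseteq> ?R"
    using lspan_superset lsubspace_0[OF lsubspace_lspan] by (fastforce intro: image_eqI[of x _ 0])
  ultimately show "lspan (insert x F) \<subseteq> ?R" by (rule lspan_least)
next
  have "lspan F \<subseteq> lspan (insert x F)" by (rule lspan_mono) auto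
  moreover have "x \<in> lspan (insert x F)" using lspan_superset by blast
  ultimately show "lspan F \<union> (\<lambda>y. x + y) ` lspan F \<subseteq> lspan (insert x F)"
    using lsubspace_add[OF lsubspace_lspan] by blast
qed

lemma inj_on_translate: "inj_on (\<lambda>y. (x::vec) + y) A"
  by (rule inj_onI) (metis vec_add_cancel_left)

lemma card_translate: "card ((\<lambda>y. (x::vec) + y) ` A) = card A"
  by (rule card_image[OF inj_on_translate])

lemma lsubspace_disjoint_translate:
  "lsubspace L \<Longrightarrow> x \<notin> L \<Longrightarrow> L \<inter> (\<lambda>y. x + y) ` L = {}"
  by (auto simp: lsubspace_add_iff add.commute)

lemma card_lsubspace_insert:
  assumes "lsubspace L" "finite L" "x \<notin> L"
  shows "card (lspan (insert x L)) = 2 * card L"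
proof -
  have "card (lspan (insert x L)) = card L + card ((\<lambda>y. x + y) ` L)"
    unfolding lspan_insert lspan_eq[OF assms(1)]
    using card_Un_disjoint[OF _ _ lsubspace_disjoint_translate] assms by simp
  then show ?thesis by (simp add: card_translate)
qed

lemma lspan_pow2: "finite F \<Longrightarrow> finite (lspan F) \<and> (\<exists>k. card (lspan F) = 2 ^ k)"
proof (induction F rule: finite_induct)
  case empty
  show ?case by (simp add: lspan_empty exI[of _ 0])
next
  case (insert x F)
  then obtain k where k: "card (lspan F) = 2 ^ k" and fin: "finite (lspan F)" by blast
  have eq: "lspan (insert x F) = lspan (insert x (lspan F))"
    by (simp add: lspan_insert lspan_eq[OF lsubspace_lspan])
  show ?case
  proof (cases "x \<in> lspan F")
    case True
    then have "lspan (insert x F) = lspan F"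
      unfolding eq by (metis insert_absorb lspan_eq[OF lsubspace_lspan])
    then show ?thesis using k fin by auto
  next
    case False
    then have "card (lspan (insert x F)) = 2 ^ Suc k"
      unfolding eq by (simp add: card_lsubspace_insert[OF lsubspace_lspan fin] k)
    moreover have "finite (lspan (insert x F))"
      using fin by (simp add: lspan_insert)
    ultimately show ?thesis by blast
  qed
qed

lemma card_lsubspace_pow2: "lsubspace L \<Longrightarrow> finite L \<Longrightarrow> \<exists>k. card L = 2 ^ k"
  using lspan_pow2 lspan_eq by metis

lemma lsubspace_proper_card_le:
  assumes "lsubspace H" "lsubspace L" "finite L" "H \<subseteq> L" "x \<in> L" "x \<notin> H"
  shows "2 * card H \<le> card L"
proof -
  have "lspan (insert x H) \<subseteq> L"
    using assms by (intro lspan_least) auto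
  then show ?thesis
    using card_mono[OF assms(3)] card_lsubspace_insert assms finite_subset by metis
qed

lemma finite_vecs: "finite (vecs n)"
proof -
  have "vecs n \<subseteq> (\<lambda>S i. if i \<in> S then (1::bit) else 0) ` Pow {0..n}"
  proof
    fix x assume "x \<in> vecs n"
    then have "x = (\<lambda>i. if i \<in> {i\<in>{0..n}. x i = 1} then 1 else 0)"
      using bit_zero_or_one unfolding vecs_def by (auto intro!: ext)
    then show "x \<in> (\<lambda>S i. if i \<in> S then (1::bit) else 0) ` Pow {0..n}" by blast
  qed
  then show ?thesis by (rule finite_subset) simp
qed

lemma lsubspace_vecs: "lsubspace (vecs n)"
  unfolding lsubspace_def vecs_def by (simp add: plus_fun_def)

lemma points_eq: "points n = vecs n - {0}"
  unfolding points_def by (simp add: zero_fun_def)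

lemma lsubspace_perp: "lsubspace {v. \<forall>f\<in>F. bform n cf v f = 0}"
  unfolding lsubspace_def by (simp add: bform_add_left)

lemma lsubspace_perp_point: "lsubspace {v. bform n cf u v = 0}"
  unfolding lsubspace_def by (simp add: bform_add_right)

lemma card_lsubspace_kernel:
  assumes L: "lsubspace L" "finite L" and u0: "u0 \<in> L" "bform n cf v u0 = 1"
  shows "card L = 2 * card {u\<in>L. bform n cf v u = 0}"
proof -
  let ?K = "{u\<in>L. bform n cf v u = 0}"
  have "L = ?K \<union> (\<lambda>y. u0 + y) ` ?K"
  proof (intro equalityI subsetI)
    fix u assume u: "u \<in> L"
    show "u \<in> ?K \<union> (\<lambda>y. u0 + y) ` ?K"
    proof (cases "bform n cf v u = 0")
      case False
      then have "u0 + u \<in> ?K"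
        using u u0 lsubspace_add[OF L(1)] bit_zero_or_one by (auto simp: bform_add_right)
      then show ?thesis by (auto intro: image_eqI[of u _ "u0 + u"])
    qed (use u in blast)
  qed (use u0 lsubspace_add[OF L(1)] in blast)+
  moreover have "?K \<inter> (\<lambda>y. u0 + y) ` ?K = {}"
    using u0 by (auto simp: bform_add_right)
  ultimately have "card L = card ?K + card ((\<lambda>y. u0 + y) ` ?K)"
    using L(2) by (metis (no_types, lifting) card_Un_disjoint finite_Un)
  then show ?thesis by (simp add: card_translate)
qed

lemma card_filter_eq_sum:
  "finite A \<Longrightarrow> card {a\<in>A. P a} = (\<Sum>a\<in>A. if P a then 1 else (0::nat))"
  by (simp add: sum.If_cases Int_def conj_commute)

lemma sum_card_kernels:
  assumes A: "lsubspace A" "finite A" and S: "finite S"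
  shows "2 * (\<Sum>s\<in>S. card {a\<in>A. bform n cf s a = 0})
         = card A * card S + card A * card {s\<in>S. \<forall>a\<in>A. bform n cf s a = 0}"
proof -
  let ?P = "\<lambda>s. \<forall>a\<in>A. bform n cf s a = 0"
  have each: "2 * card {a\<in>A. bform n cf s a = 0} = card A + (if ?P s then card A else 0)" for s
  proof (cases "?P s")
    case False
    then obtain a0 where "a0 \<in> A" "bform n cf s a0 = 1" using bit_zero_or_one by blast
    then have "card A = 2 * card {a\<in>A. bform n cf s a = 0}" by (rule card_lsubspace_kernel[OF A])
    then show ?thesis by (simp only: if_not_P[OF False])
  next
    case True
    then have "{a\<in>A. bform n cf s a = 0} = A" by blast
    with True show ?thesis by simp
  qed
  have "2 * (\<Sum>s\<in>S. card {a\<in>A. bform n cf s a = 0})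
      = (\<Sum>s\<in>S. card A + (if ?P s then card A else 0))"
    by (simp add: sum_distrib_left each)
  also have "\<dots> = card A * card S + (\<Sum>s\<in>S. if ?P s then card A else 0)"
    by (simp add: sum.distrib)
  also have "(\<Sum>s\<in>S. if ?P s then card A else 0) = card A * card {s\<in>S. ?P s}"
    unfolding card_filter_eq_sum[OF S] sum_distrib_left by (rule sum.cong) auto
  finally show ?thesis .
qed

text \<open>The pairing between two subspaces has the same rank seen from either side.\<close>

lemma card_annihilator_duality:
  assumes S: "lsubspace S" "finite S" and A: "lsubspace A" "finite A"
  shows "card S * card {a\<in>A. \<forall>s\<in>S. bform n cf s a = 0}
       = card A * card {s\<in>S. \<forall>a\<in>A. bform n cf s a = 0}"
proof -
  have "(\<Sum>s\<in>S. card {a\<in>A. bform n cf s a = 0}) = (\<Sum>a\<in>A. card {s\<in>S. bform n cf a s = 0})"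
    using sum.swap[of "\<lambda>s a. if bform n cf s a = 0 then 1 else (0::nat)" S A]
    by (simp add: card_filter_eq_sum A(2) S(2) bform_commute)
  moreover have "{a\<in>A. \<forall>s\<in>S. bform n cf a s = 0} = {a\<in>A. \<forall>s\<in>S. bform n cf s a = 0}"
    using bform_commute by metis
  ultimately show ?thesis
    using sum_card_kernels[OF A S(2), of n cf] sum_card_kernels[OF S A(2), of n cf]
    by (simp add: mult.commute)
qed

lemma card_le_if_perp_subset:
  assumes L: "lsubspace L" "finite L" and A: "lsubspace A" "finite A"
    and orth: "\<forall>x\<in>L. \<forall>y\<in>L. bform n cf x y = 0"
    and perp: "{x\<in>L. \<forall>a\<in>A. bform n cf x a = 0} \<subseteq> A"
  shows "card L \<le> card A"
proof -
  let ?G = "{x\<in>L. \<forall>a\<in>A. bform n cf x a = 0}"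
  let ?Z = "{a\<in>A. \<forall>x\<in>L. bform n cf x a = 0}"
  have "?G \<subseteq> ?Z" using perp orth by blast
  then have "card L * card ?Z \<le> card A * card ?Z"
    using card_annihilator_duality[OF L A, of n cf] A(2) by (simp add: card_mono)
  moreover have "card ?Z > 0" using A lsubspace_0[OF A(1)] by (auto simp: card_gt_0_iff)
  ultimately show ?thesis by simp
qed

subsection \<open>Totally singular subspaces\<close>

definition totally_singular :: "nat \<Rightarrow> (nat \<Rightarrow> nat \<Rightarrow> bit) \<Rightarrow> vec set \<Rightarrow> bool" where
  "totally_singular n cf F \<longleftrightarrow> F \<subseteq> vecs n \<and> (\<forall>x\<in>F. qform n cf x = 0) \<and>
     (\<forall>x\<in>F. \<forall>y\<in>F. bform n cf x y = 0)"

lemma totally_singular_subset: "A \<subseteq> B \<Longrightarrow> totally_singular n cf B \<Longrightarrow> totally_singular n cf A"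
  unfolding totally_singular_def by blast

lemma totally_singular_Un:
  assumes "totally_singular n cf A" "totally_singular n cf B"
    and "\<forall>x\<in>A. \<forall>y\<in>B. bform n cf x y = 0"
  shows "totally_singular n cf (A \<union> B)"
  using assms bform_commute unfolding totally_singular_def by (simp add: ball_Un) metis

lemma totally_singular_lspan:
  assumes ts: "totally_singular n cf F"
  shows "totally_singular n cf (lspan F)"
proof -
  have F: "F \<subseteq> vecs n" "\<forall>x\<in>F. qform n cf x = 0" "\<forall>x\<in>F. \<forall>y\<in>F. bform n cf x y = 0"
    using ts unfolding totally_singular_def by auto
  have "lspan F \<subseteq> {v. \<forall>f\<in>F. bform n cf v f = 0}"
    using F(3) by (intro lspan_least[OF lsubspace_perp]) blast
  then have "lspan F \<subseteq> {v. bform n cf x v = 0}" if "x \<in> lspan F" for x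
    using that bform_commute by (intro lspan_least[OF lsubspace_perp_point]) blast
  then have B: "\<forall>x\<in>lspan F. \<forall>y\<in>lspan F. bform n cf x y = 0" by blast
  have "lsubspace {v \<in> lspan F. qform n cf v = 0}"
    using B lsubspace_add[OF lsubspace_lspan] lsubspace_0[OF lsubspace_lspan]
    unfolding lsubspace_def by (auto simp: qform_add)
  then have "lspan F \<subseteq> {v \<in> lspan F. qform n cf v = 0}"
    using F(2) lspan_superset by (intro lspan_least) blast+
  then show ?thesis
    using B lspan_least[OF lsubspace_vecs F(1)] unfolding totally_singular_def by blast
qed

lemma is_subspace_of_lsubspace:
  assumes "lsubspace L" "L \<subseteq> vecs n"
  shows "is_subspace n (L - {0})"
  unfolding is_subspace_def points_eq vadd_eq_plus
  using assms lsubspace_add[OF assms(1)] vec_add_eq_0_iff by auto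

lemma lsubspace_of_is_subspace: "is_subspace n S \<Longrightarrow> lsubspace (insert 0 S)"
  unfolding is_subspace_def lsubspace_def vadd_eq_plus by (auto simp: vec_add_eq_0_iff)

lemma pspan_eq:
  assumes "A \<subseteq> points n"
  shows "pspan n A = lspan A - {0}"
proof -
  have "A \<subseteq> vecs n" using assms points_eq by auto
  then have "is_subspace n (lspan A - {0})"
    by (rule is_subspace_of_lsubspace[OF lsubspace_lspan lspan_least[OF lsubspace_vecs]])
  moreover have "A \<subseteq> lspan A - {0}" using lspan_superset assms points_eq by blast
  moreover have "lspan A - {0} \<subseteq> S" if "is_subspace n S" "A \<subseteq> S" for S
    using lspan_least[OF lsubspace_of_is_subspace[OF that(1)]] that(2) by blast
  ultimately show ?thesis unfolding pspan_def by blast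
qed

lemma quadric_iff: "x \<in> quadric n cf \<longleftrightarrow> x \<in> vecs n \<and> x \<noteq> 0 \<and> qform n cf x = 0"
  unfolding quadric_def points_eq by auto

lemma finite_quadric: "finite (quadric n cf)"
  using finite_subset[OF _ finite_vecs] quadric_iff by blast

lemma totally_singular_minus_0: "totally_singular n cf L \<Longrightarrow> L - {0} \<subseteq> quadric n cf"
  unfolding totally_singular_def by (auto simp: quadric_iff)

lemma pspan_subset_quadric_iff:
  assumes A: "A \<subseteq> quadric n cf"
  shows "pspan n A \<subseteq> quadric n cf \<longleftrightarrow> (\<forall>x\<in>A. \<forall>y\<in>A. bform n cf x y = 0)"
proof -
  have ps: "pspan n A = lspan A - {0}"
    using A by (intro pspan_eq) (auto simp: quadric_def)
  show ?thesis
  proof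
    assume sub: "pspan n A \<subseteq> quadric n cf"
    show "\<forall>x\<in>A. \<forall>y\<in>A. bform n cf x y = 0"
    proof (intro ballI)
      fix x y assume xy: "x \<in> A" "y \<in> A"
      show "bform n cf x y = 0"
      proof (cases "x = y")
        case False
        then have "x + y \<in> pspan n A"
          unfolding ps using lsubspace_add[OF lsubspace_lspan] lspan_superset xy vec_add_eq_0_iff
          by blast
        then have "qform n cf (x + y) = 0" using sub quadric_iff by blast
        moreover have "qform n cf x = 0" "qform n cf y = 0" using xy A quadric_iff by blast+
        ultimately show ?thesis by (simp add: qform_add)
      qed simp
    qed
  next
    assume "\<forall>x\<in>A. \<forall>y\<in>A. bform n cf x y = 0"
    then have "totally_singular n cf A"
      using A unfolding totally_singular_def by (auto simp: quadric_iff)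
    then show "pspan n A \<subseteq> quadric n cf"
      unfolding ps by (intro totally_singular_minus_0 totally_singular_lspan)
  qed
qed

lemma card_totally_singular_le:
  assumes pi: "proj_index n cf g" and L: "lsubspace L" "totally_singular n cf L"
  shows "card L \<le> 2 ^ (g + 1)"
proof -
  have Lv: "L \<subseteq> vecs n" using L(2) unfolding totally_singular_def by blast
  then have fin: "finite L" using finite_vecs finite_subset by blast
  obtain k where k: "card L = 2 ^ k" using card_lsubspace_pow2[OF L(1) fin] by blast
  show ?thesis
  proof (cases k)
    case (Suc m)
    then have "card (L - {0}) = 2 ^ (m + 1) - 1" using k fin lsubspace_0[OF L(1)] by simp
    then have "subspace_dim n (L - {0}) m \<and> L - {0} \<subseteq> quadric n cf"
      unfolding subspace_dim_def
      using is_subspace_of_lsubspace[OF L(1) Lv] totally_singular_minus_0[OF L(2)] by simp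
    then have "m \<le> g" using pi unfolding proj_index_def by blast
    then show ?thesis using k Suc by simp
  qed (use k in simp)
qed

lemma generator_of_totally_singular:
  assumes L: "lsubspace L" "totally_singular n cf L" and card: "card L = 2 ^ (g + 1)"
  shows "generator n cf g (L - {0})"
proof -
  have "L \<subseteq> vecs n" using L(2) unfolding totally_singular_def by blast
  moreover have "card (L - {0}) = 2 ^ (g + 1) - 1"
    using card lsubspace_0[OF L(1)] card_ge_0_finite by fastforce
  ultimately show ?thesis unfolding generator_def subspace_dim_def
    using is_subspace_of_lsubspace[OF L(1)] totally_singular_minus_0[OF L(2)] by simp
qed

lemma totally_singular_eq_of_card:
  assumes pi: "proj_index n cf g" and L: "lsubspace L" "totally_singular n cf L"
    and "A \<subseteq> L" "card A = 2 ^ (g + 1)"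
  shows "L = A"
proof -
  have "finite L"
    using L(2) finite_vecs finite_subset unfolding totally_singular_def by blast
  then show ?thesis
    using card_seteq card_totally_singular_le[OF pi L] assms(4,5) by metis
qed

subsection \<open>Point types and the switched graph\<close>

text \<open>For R on the quadric outside \<alpha>, the span of \<alpha> and R lies on the quadric iff R is
  orthogonal to \<alpha>; so type (iii) means being on the quadric and not orthogonal to \<alpha>.\<close>

definition type_iii :: "nat \<Rightarrow> (nat \<Rightarrow> nat \<Rightarrow> bit) \<Rightarrow> vec set \<Rightarrow> vec \<Rightarrow> bool" where
  "type_iii n cf \<alpha> R \<longleftrightarrow> R \<in> quadric n cf \<and> (\<exists>c\<in>\<alpha>. bform n cf R c = 1)"

locale singular_subspace =
  fixes n :: nat and cf :: "nat \<Rightarrow> nat \<Rightarrow> bit" and \<alpha> :: "vec set"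
  assumes subspace_alpha: "is_subspace n \<alpha>" and alpha_quadric: "\<alpha> \<subseteq> quadric n cf"
begin

abbreviation "Q \<equiv> qform n cf"
abbreviation "B \<equiv> bform n cf"
abbreviation "A0 \<equiv> insert 0 \<alpha>"

lemma zero_notin_alpha: "0 \<notin> \<alpha>"
  using alpha_quadric quadric_iff by blast

lemma finite_alpha: "finite \<alpha>"
  using alpha_quadric finite_quadric finite_subset by blast

lemma lsubspace_A0: "lsubspace A0"
  using lsubspace_of_is_subspace[OF subspace_alpha] .

lemma alpha_orth:
  assumes "c \<in> \<alpha>" "c' \<in> \<alpha>"
  shows "B c c' = 0"
proof -
  have "pspan n \<alpha> \<subseteq> \<alpha>" unfolding pspan_def using subspace_alpha by blast
  then show ?thesis using pspan_subset_quadric_iff[OF alpha_quadric] alpha_quadric assms by blast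
qed

lemma totally_singular_A0: "totally_singular n cf A0"
  using alpha_quadric alpha_orth lsubspace_0[OF lsubspace_vecs]
  unfolding totally_singular_def by (auto simp: quadric_iff)

lemma adj_iff: "adj n cf X Y \<longleftrightarrow> X \<in> quadric n cf \<and> Y \<in> quadric n cf \<and> X \<noteq> Y \<and> B X Y = 0"
proof (cases "X \<in> quadric n cf \<and> Y \<in> quadric n cf")
  case True
  then have "pspan n {X, Y} \<subseteq> quadric n cf \<longleftrightarrow> B X Y = 0"
    using pspan_subset_quadric_iff[of "{X, Y}" n cf] bform_commute[of n cf Y X] by simp
  then show ?thesis unfolding adj_def by blast
qed (auto simp: adj_def)

lemma Xs_iff: "X \<in> Xs n cf \<alpha> \<longleftrightarrow> X \<in> quadric n cf \<and> X \<notin> \<alpha> \<and> (\<forall>c\<in>\<alpha>. B X c = 0)"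
proof (cases "X \<in> quadric n cf")
  case True
  have "(\<forall>x\<in>insert X \<alpha>. \<forall>y\<in>insert X \<alpha>. B x y = 0) \<longleftrightarrow> (\<forall>c\<in>\<alpha>. B X c = 0)"
    using alpha_orth bform_commute[of n cf X] by auto
  then have "pspan n (insert X \<alpha>) \<subseteq> quadric n cf \<longleftrightarrow> (\<forall>c\<in>\<alpha>. B X c = 0)"
    using pspan_subset_quadric_iff[of "insert X \<alpha>" n cf] True alpha_quadric by simp
  then show ?thesis unfolding Xs_def using True by blast
qed (auto simp: Xs_def)

lemma alpha_disjoint_Xs: "\<alpha> \<inter> Xs n cf \<alpha> = {}"
  using Xs_iff by blast

lemma finite_Xs: "finite (Xs n cf \<alpha>)"
  using finite_subset[OF _ finite_quadric] Xs_iff by blast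

lemma type_iii_notin_Xs: "type_iii n cf \<alpha> R \<Longrightarrow> R \<notin> Xs n cf \<alpha>"
  unfolding type_iii_def Xs_iff by auto

lemma type_iii_notin_alpha: "type_iii n cf \<alpha> R \<Longrightarrow> R \<notin> \<alpha>"
  unfolding type_iii_def using alpha_orth by fastforce

lemma quadric_point_types:
  "R \<in> quadric n cf \<Longrightarrow> R \<in> \<alpha> \<or> R \<in> Xs n cf \<alpha> \<or> type_iii n cf \<alpha> R"
  unfolding type_iii_def Xs_iff using bit_zero_or_one by blast

lemma Xs_translate:
  assumes X: "X \<in> Xs n cf \<alpha>" and c: "c \<in> \<alpha>"
  shows "c + X \<in> Xs n cf \<alpha>"
proof -
  have X': "X \<in> quadric n cf" "X \<notin> \<alpha>" "\<forall>c\<in>\<alpha>. B X c = 0"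
    using X Xs_iff[of X] by blast+
  have cq: "c \<in> quadric n cf" using c alpha_quadric by blast
  have "c \<in> vecs n" "X \<in> vecs n" "X \<noteq> 0" using X'(1) cq quadric_iff by blast+
  then have "c + X \<in> vecs n" "c + X \<notin> A0"
    using lsubspace_add[OF lsubspace_vecs] X'(2) c lsubspace_add_iff[OF lsubspace_A0, of c X]
    by blast+
  moreover have "Q (c + X) = 0"
    using X'(1,3) c cq bform_commute[of n cf c X] by (simp add: qform_add quadric_iff)
  moreover have "\<forall>c'\<in>\<alpha>. B (c + X) c' = 0"
    using X'(3) c alpha_orth by (simp add: bform_add_left)
  ultimately show ?thesis unfolding Xs_iff quadric_iff by blast
qed

text \<open>Translation by a point c of \<alpha> with B R c = 1 maps X_s to itself and swaps the
  neighbours of R in X_s with its non-neighbours.\<close>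

lemma type_iii_switched:
  assumes R: "type_iii n cf \<alpha> R"
  shows "switched n cf \<alpha> R"
proof -
  obtain c where c: "c \<in> \<alpha>" "B R c = 1" using R unfolding type_iii_def by blast
  let ?X = "Xs n cf \<alpha>"
  let ?N = "{X\<in>?X. adj n cf R X}"
  let ?M = "?X - ?N"
  have Rq: "R \<in> quadric n cf" using R type_iii_def by blast
  have RX: "R \<notin> ?X" by (rule type_iii_notin_Xs[OF R])
  have adjX: "X \<in> ?X \<Longrightarrow> adj n cf R X \<longleftrightarrow> B R X = 0" for X
    using adj_iff Rq RX Xs_iff by blast
  have swap: "(\<lambda>y. c + y) ` ?N \<subseteq> ?M" "(\<lambda>y. c + y) ` ?M \<subseteq> ?N"
    using Xs_translate[OF _ c(1)] adjX c(2) bit_zero_or_one by (auto simp: bform_add_right)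
  have fin: "finite ?N" "finite ?M" using finite_Xs by auto
  have "card ?N = card ?M"
    using card_mono[OF fin(2) swap(1)] card_mono[OF fin(1) swap(2)] card_translate by (metis le_antisym)
  moreover have "card ?M = card ?X - card ?N"
    by (rule card_Diff_subset[OF fin(1)]) blast
  moreover have "card ?N \<le> card ?X" by (rule card_mono[OF finite_Xs]) blast
  ultimately have "2 * card ?N = card ?X" by simp
  then show ?thesis unfolding switched_def Ys_def using Rq RX by blast
qed

lemma switched_type_iii:
  assumes sw: "switched n cf \<alpha> U" and V: "V \<in> Xs n cf \<alpha>"
  shows "type_iii n cf \<alpha> U"
proof -
  have U: "U \<in> quadric n cf" "U \<notin> Xs n cf \<alpha>" using sw unfolding switched_def Ys_def by auto
  have "U \<notin> \<alpha>"
  proof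
    assume "U \<in> \<alpha>"
    then have "adj n cf U X" if "X \<in> Xs n cf \<alpha>" for X
      using that U adj_iff Xs_iff bform_commute by metis
    then have "{X \<in> Xs n cf \<alpha>. adj n cf U X} = Xs n cf \<alpha>" by blast
    then have "card (Xs n cf \<alpha>) = 0" using sw unfolding switched_def by simp
    then show False using V finite_Xs by auto
  qed
  then show ?thesis using quadric_point_types[OF U(1)] U by blast
qed

lemma adj_s_iff:
  assumes "U \<in> quadric n cf" "V \<in> quadric n cf" "U \<noteq> V"
  shows "adj_s n cf \<alpha> U V \<longleftrightarrow>
    (if (type_iii n cf \<alpha> U \<and> V \<in> Xs n cf \<alpha>) \<or> (type_iii n cf \<alpha> V \<and> U \<in> Xs n cf \<alpha>)
     then B U V = 1 else B U V = 0)"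
proof -
  have "switched n cf \<alpha> U \<and> V \<in> Xs n cf \<alpha> \<longleftrightarrow> type_iii n cf \<alpha> U \<and> V \<in> Xs n cf \<alpha>"
    "switched n cf \<alpha> V \<and> U \<in> Xs n cf \<alpha> \<longleftrightarrow> type_iii n cf \<alpha> V \<and> U \<in> Xs n cf \<alpha>"
    using switched_type_iii type_iii_switched by blast+
  moreover have "adj n cf U V \<longleftrightarrow> B U V = 0"
    using adj_iff assms by blast
  ultimately show ?thesis unfolding adj_s_def using assms(3) bit_zero_or_one by auto
qed

end

subsection \<open>Cliques of size 2^(g+1) - 1 in \<Gamma>_s\<close>

locale big_clique = singular_subspace +
  fixes g s :: nat and C :: "vec set"
  assumes proj_index: "proj_index n cf g" and g_pos: "g \<ge> 1" and s_less_g: "s < g"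
    and card_alpha: "card \<alpha> = 2 ^ (s + 1) - 1"
    and clique: "clique_s n cf \<alpha> C" and card_C: "card C = 2 ^ (g + 1) - 1"
begin

abbreviation "P \<equiv> (2::nat) ^ (g + 1)"
abbreviation "C1 \<equiv> C \<inter> \<alpha>"
abbreviation "C2 \<equiv> C \<inter> Xs n cf \<alpha>"
abbreviation "C3 \<equiv> {R\<in>C. type_iii n cf \<alpha> R}"

lemma C_quadric: "C \<subseteq> quadric n cf"
  using clique clique_s_def by blast

lemma finite_C: "finite C"
  using finite_subset[OF C_quadric finite_quadric] .

lemma zero_notin_C: "0 \<notin> C"
  using C_quadric quadric_iff by blast

lemma card_insert_0_C: "card (insert 0 C) = P"
  using card_C zero_notin_C finite_C by simp

lemma card_A0_less: "card A0 < P"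
proof -
  have "card A0 = 2 ^ (s + 1)" using card_alpha zero_notin_alpha finite_alpha by simp
  then show ?thesis using s_less_g by simp
qed

lemma C_partition: "C = C1 \<union> C2 \<union> C3"
  using quadric_point_types C_quadric by blast

lemma card_C_split: "card C = card C1 + card C2 + card C3"
proof -
  have "C1 \<inter> C2 = {}" "(C1 \<union> C2) \<inter> C3 = {}"
    using alpha_disjoint_Xs type_iii_notin_alpha type_iii_notin_Xs by blast+
  then show ?thesis
    using C_partition finite_C by (metis card_Un_disjoint finite_Un)
qed

lemma clique_orth:
  assumes "U \<in> C" "V \<in> C" "\<not> (U \<in> C2 \<and> V \<in> C3)" "\<not> (U \<in> C3 \<and> V \<in> C2)"
  shows "B U V = 0"
proof (cases "U = V")
  case False
  have q: "U \<in> quadric n cf" "V \<in> quadric n cf" using assms(1,2) C_quadric by auto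
  have cond: "\<not> ((type_iii n cf \<alpha> U \<and> V \<in> Xs n cf \<alpha>) \<or> (type_iii n cf \<alpha> V \<and> U \<in> Xs n cf \<alpha>))"
    using assms by blast
  have "adj_s n cf \<alpha> U V" using clique assms(1,2) False unfolding clique_s_def by blast
  then show ?thesis using adj_s_iff[OF q False, unfolded if_not_P[OF cond]] by blast
qed simp

lemma clique_nonorth:
  assumes "U \<in> C2" "V \<in> C3"
  shows "B U V = 1"
proof -
  have "U \<noteq> V" using assms type_iii_notin_Xs by blast
  then have "adj_s n cf \<alpha> U V" using clique assms unfolding clique_s_def by blast
  moreover have q: "U \<in> quadric n cf" "V \<in> quadric n cf" using assms C_quadric by auto
  moreover have "(type_iii n cf \<alpha> U \<and> V \<in> Xs n cf \<alpha>) \<or> (type_iii n cf \<alpha> V \<and> U \<in> Xs n cf \<alpha>)"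
    using assms by blast
  ultimately show ?thesis using adj_s_iff[OF q \<open>U \<noteq> V\<close>] by simp
qed

lemma totally_singular_C: "C2 = {} \<or> C3 = {} \<Longrightarrow> totally_singular n cf C"
  using C_quadric clique_orth unfolding totally_singular_def by (auto simp: quadric_iff)

lemma lspan_eq_insert_0_C:
  assumes "totally_singular n cf F" "insert 0 C \<subseteq> lspan F"
  shows "lspan F = insert 0 C"
  by (rule totally_singular_eq_of_card[OF proj_index lsubspace_lspan
        totally_singular_lspan[OF assms(1)] assms(2) card_insert_0_C])

lemma classA_if_no_type_iii:
  assumes "C3 = {}"
  shows "classA n cf g \<alpha> C"
proof -
  have orth: "B x y = 0" if "x \<in> C" "y \<in> A0" for x y
  proof -
    have "x \<in> C1 \<or> x \<in> C2" using that(1) C_partition assms by blast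
    then have "\<forall>c\<in>\<alpha>. B x c = 0" using alpha_orth Xs_iff[of x] by blast
    then show ?thesis using that(2) by auto
  qed
  have "totally_singular n cf C" using totally_singular_C assms by blast
  then have ts: "totally_singular n cf (C \<union> A0)"
    by (rule totally_singular_Un[OF _ totally_singular_A0]) (simp add: orth)
  have "insert 0 C \<subseteq> lspan (C \<union> A0)" by (rule order_trans[OF _ lspan_superset]) blast
  then have L: "lspan (C \<union> A0) = insert 0 C" by (rule lspan_eq_insert_0_C[OF ts])
  have "\<alpha> \<subseteq> lspan (C \<union> A0)" by (rule order_trans[OF _ lspan_superset]) blast
  then have "\<alpha> \<subseteq> C" unfolding L using subset_insert zero_notin_alpha by metis
  moreover have "generator n cf g (lspan (C \<union> A0) - {0})"
    using generator_of_totally_singular[OF lsubspace_lspan totally_singular_lspan[OF ts]]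
      L card_insert_0_C by simp
  then have "generator n cf g C" using L zero_notin_C by simp
  ultimately show ?thesis unfolding classA_def by simp
qed

text \<open>Without type (ii) points the clique spans a generator L, and the part of L orthogonal
  to \<alpha> lies in \<alpha>; by duality L would be no larger than \<alpha>.\<close>

lemma type_ii_if_type_iii:
  assumes "C3 \<noteq> {}"
  shows "C2 \<noteq> {}"
proof
  assume C2: "C2 = {}"
  have ts: "totally_singular n cf C" using totally_singular_C C2 by blast
  have L: "lspan C = insert 0 C"
    using lspan_eq_insert_0_C[OF ts] lspan_superset lsubspace_0[OF lsubspace_lspan] by blast
  have "{x\<in>lspan C. \<forall>a\<in>A0. B x a = 0} \<subseteq> A0"
    unfolding L using C_partition C2 unfolding type_iii_def by fastforce
  then have "card (lspan C) \<le> card A0"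
    using totally_singular_lspan[OF ts] finite_C finite_alpha L lsubspace_A0
    by (intro card_le_if_perp_subset[OF lsubspace_lspan _ lsubspace_A0])
       (auto simp: totally_singular_def)
  then show False using L card_insert_0_C card_A0_less by simp
qed

end

subsection \<open>Cliques with points of types (ii) and (iii)\<close>

text \<open>Translating the type (ii) points of the clique by one of them, X0, turns the clique into
  a totally singular set F; its span S is the generator \<Pi> of Class B, split by the
  hyperplane S0 orthogonal to X0 and containing the subspace G orthogonal to \<alpha>.\<close>

locale mixed_clique = big_clique +
  fixes X0 R0 :: vec
  assumes X0_type_ii: "X0 \<in> C2" and R0_type_iii: "R0 \<in> C3"
begin

abbreviation "F \<equiv> C1 \<union> C3 \<union> (\<lambda>y. X0 + y) ` C2"
abbreviation "S \<equiv> lspan F"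
definition S0 :: "vec set" where "S0 = S \<inter> {v. B X0 v = 0}"
definition G :: "vec set" where "G = S \<inter> {v. \<forall>f\<in>A0. B v f = 0}"

lemma mem_S0_iff: "x \<in> S0 \<longleftrightarrow> x \<in> S \<and> B X0 x = 0"
  unfolding S0_def by blast

lemma mem_G_iff: "x \<in> G \<longleftrightarrow> x \<in> S \<and> (\<forall>f\<in>A0. B x f = 0)"
  unfolding G_def by blast

lemma G_subset_S: "G \<subseteq> S"
  unfolding G_def by blast

lemma S0_subset_S: "S0 \<subseteq> S"
  unfolding S0_def by blast

lemma X0_facts: "X0 \<in> C" "X0 \<notin> \<alpha>" "X0 \<noteq> 0" "Q X0 = 0" "X0 \<in> vecs n" "\<forall>c\<in>\<alpha>. B X0 c = 0"
  using X0_type_ii Xs_iff quadric_iff by auto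

lemma bform_X0_R0: "B X0 R0 = 1"
  using clique_nonorth X0_type_ii R0_type_iii by blast

lemma bform_type_ii_eq:
  assumes u: "u \<in> C" and X: "X \<in> C2"
  shows "B u X = B u X0"
proof (cases "u \<in> C3")
  case True
  then show ?thesis using clique_nonorth[OF X True] clique_nonorth[OF X0_type_ii True]
    by (simp add: bform_commute)
next
  case False
  have "X \<notin> C3" "X0 \<notin> C3" using X X0_type_ii type_iii_notin_Xs by auto
  then have "B u X = 0" "B u X0 = 0"
    using False u X X0_facts(1) by (auto intro: clique_orth)
  then show ?thesis by simp
qed

lemma bform_translate_type_ii: "u \<in> C \<Longrightarrow> X \<in> C2 \<Longrightarrow> B u (X0 + X) = 0"
  using bform_type_ii_eq by (simp add: bform_add_right)

lemma totally_singular_F: "totally_singular n cf F"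
proof -
  have C: "x \<in> vecs n" "Q x = 0" if "x \<in> C" for x
    using that C_quadric quadric_iff by blast+
  have "\<forall>x\<in>C1 \<union> C3. \<forall>y\<in>C1 \<union> C3. B x y = 0"
    using type_iii_notin_alpha type_iii_notin_Xs alpha_disjoint_Xs by (auto intro!: clique_orth)
  then have ts13: "totally_singular n cf (C1 \<union> C3)"
    unfolding totally_singular_def using C by blast
  have "x + y \<in> vecs n" if "x \<in> vecs n" "y \<in> vecs n" for x y
    using that lsubspace_add[OF lsubspace_vecs] by blast
  moreover have "B X0 X = 0" if "X \<in> C2" for X
    using bform_type_ii_eq[OF X0_facts(1) that] by simp
  ultimately have ts2: "totally_singular n cf ((\<lambda>y. X0 + y) ` C2)"
    unfolding totally_singular_def using C X0_facts bform_translate_type_ii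
    by (auto simp: qform_add bform_add_left)
  show ?thesis
    by (rule totally_singular_Un[OF ts13 ts2]) (auto intro: bform_translate_type_ii)
qed

lemma totally_singular_S: "totally_singular n cf S"
  by (rule totally_singular_lspan[OF totally_singular_F])

lemma finite_S: "finite S"
  using totally_singular_S finite_vecs finite_subset unfolding totally_singular_def by blast

lemma card_S_le: "card S \<le> P"
  by (rule card_totally_singular_le[OF proj_index lsubspace_lspan totally_singular_S])

lemma S_orth: "x \<in> S \<Longrightarrow> y \<in> S \<Longrightarrow> B x y = 0"
  using totally_singular_S unfolding totally_singular_def by blast

lemma finite_G: "finite G"
  using finite_subset[OF G_subset_S finite_S] .

lemma finite_S0: "finite S0"
  using finite_subset[OF S0_subset_S finite_S] .

lemma lsubspace_S0: "lsubspace S0"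
  unfolding S0_def by (rule lsubspace_Int[OF lsubspace_lspan lsubspace_perp_point])

lemma lsubspace_G: "lsubspace G"
  unfolding G_def by (rule lsubspace_Int[OF lsubspace_lspan lsubspace_perp])

lemma R0_in_S: "R0 \<in> S"
  using R0_type_iii lspan_superset[of F] by auto

lemma X0_notin_S: "X0 \<notin> S"
  using S_orth[OF _ R0_in_S] bform_X0_R0 by force

lemma alpha_not_orth_R0:
  obtains c where "c \<in> \<alpha>" "B R0 c = 1" "c \<notin> S"
  using R0_type_iii S_orth[OF R0_in_S] unfolding type_iii_def by force

lemma card_S_eq: "card S = 2 * card S0"
proof -
  have "card S = 2 * card {u\<in>S. B X0 u = 0}"
    by (rule card_lsubspace_kernel[OF lsubspace_lspan finite_S R0_in_S bform_X0_R0])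
  then show ?thesis by (simp add: S0_def Int_def conj_commute)
qed

lemma C3_subset_S_minus_S0: "C3 \<subseteq> S - S0"
  using lspan_superset[of F] clique_nonorth[OF X0_type_ii] by (auto simp: mem_S0_iff)

lemma C3_disjoint_G: "C3 \<inter> G = {}"
  unfolding type_iii_def by (fastforce simp: mem_G_iff)

lemma C1_subset_G_S0: "C1 \<subseteq> G \<inter> S0"
  using lspan_superset[of F] alpha_orth X0_facts(6) by (auto simp: mem_G_iff mem_S0_iff)

lemma translate_C2_subset_G_S0: "(\<lambda>y. X0 + y) ` C2 \<subseteq> G \<inter> S0"
proof -
  have "B (X0 + X) c = 0" if "X \<in> C2" "c \<in> \<alpha>" for X c
    using that X0_facts(6) Xs_iff[of X] by (simp add: bform_add_left)
  then show ?thesis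
    using lspan_superset[of F] bform_translate_type_ii[OF X0_facts(1)]
    by (auto simp: mem_G_iff mem_S0_iff)
qed

lemma card_C3_S0_le: "card C3 + card S0 \<le> card S"
  using C3_subset_S_minus_S0
  by (intro card_add_le_of_disjoint[OF finite_S]) (auto simp: mem_S0_iff)

text \<open>If some w in G were not orthogonal to X0, then G \<inter> S0 would have index 2 in G and
  index at least 2 in S0 (witnessed by R0 + w), leaving too little room in S for the clique.\<close>

lemma G_subset_S0: "G \<subseteq> S0"
proof (rule ccontr)
  assume "\<not> G \<subseteq> S0"
  then obtain w where "w \<in> G" "w \<notin> S0" by blast
  then have w: "w \<in> G" "B X0 w = 1" using bit_zero_or_one by (auto simp: mem_G_iff mem_S0_iff)
  let ?G0 = "G \<inter> S0"
  have lsub: "lsubspace ?G0" by (rule lsubspace_Int[OF lsubspace_G lsubspace_S0])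
  have "card G = 2 * card {u\<in>G. B X0 u = 0}"
    by (rule card_lsubspace_kernel[OF lsubspace_G finite_G w])
  moreover have "{u\<in>G. B X0 u = 0} = ?G0" by (auto simp: mem_G_iff mem_S0_iff)
  ultimately have card_G: "card G = 2 * card ?G0" by simp
  obtain c where c: "c \<in> \<alpha>" "B R0 c = 1" by (rule alpha_not_orth_R0)
  have "R0 + w \<in> S0" "R0 + w \<notin> ?G0"
    using w lsubspace_add[OF lsubspace_lspan R0_in_S] bform_X0_R0 c
    by (auto simp: bform_add_right bform_add_left mem_G_iff mem_S0_iff)
  then have "2 * card ?G0 \<le> card S0"
    by (intro lsubspace_proper_card_le[OF lsub lsubspace_S0 finite_S0])
      (auto simp: mem_G_iff mem_S0_iff)
  moreover have "card C3 + card (S0 \<union> G) \<le> card S"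
    using C3_subset_S_minus_S0 C3_disjoint_G
    by (intro card_add_le_of_disjoint[OF finite_S]) (auto simp: mem_G_iff mem_S0_iff)
  moreover have "card (S0 \<union> G) + card ?G0 = card S0 + card G"
    using card_Un_Int[OF finite_S0 finite_G] by (simp add: Int_ac)
  moreover have "card C1 + 1 \<le> card ?G0"
    using C1_subset_G_S0 zero_notin_C lsubspace_0[OF lsub] finite_G
    by (intro card_add_one_le[of ?G0 0]) auto
  moreover have "card ((\<lambda>y. X0 + y) ` C2) \<le> card ?G0"
    using translate_C2_subset_G_S0 finite_G by (intro card_mono) auto
  then have "card C2 \<le> card ?G0" by (simp add: card_translate)
  ultimately show False
    using card_G card_S_eq card_S_le card_C_split card_C by linarith
qed

lemma totally_singular_G_A0: "totally_singular n cf (G \<union> A0)"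
proof (rule totally_singular_Un[OF _ totally_singular_A0])
  show "totally_singular n cf G"
    by (rule totally_singular_subset[OF G_subset_S totally_singular_S])
qed (auto simp: mem_G_iff)

lemma translate_X0_not_in_G_A0:
  assumes no_translate: "\<forall>a\<in>\<alpha>. X0 + a \<notin> G" and k: "k \<in> G \<union> A0"
  shows "X0 + k \<notin> G \<union> A0"
proof
  assume Xk: "X0 + k \<in> G \<union> A0"
  have notG: "X0 + a \<notin> G" if "a \<in> A0" for a
    using that no_translate X0_notin_S by (auto simp: mem_G_iff)
  have X0: "X0 \<notin> G" "X0 \<notin> A0" using X0_notin_S X0_facts(2,3) G_subset_S by auto
  have swap: "k + X0 = X0 + k" by (simp add: add.commute)
  consider "k \<in> G" "X0 + k \<in> G" | "X0 + k \<in> A0" | "k \<in> A0" "X0 + k \<in> G"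
    using k Xk by blast
  then show False
  proof cases
    case 1
    then show False using lsubspace_add_iff[OF lsubspace_G, of k X0] swap X0 by simp
  next
    case 2
    then have "k \<notin> G" using notG[OF 2] by simp
    then have "k \<in> A0" using k by blast
    then show False using 2 lsubspace_add_iff[OF lsubspace_A0, of k X0] swap X0 by simp
  qed (use notG in blast)
qed

text \<open>If no translate X0 + a (a in \<alpha>) lies in G, then X0 + (G \<union> A0) is disjoint from
  G \<union> A0 inside a totally singular subspace.\<close>

lemma card_G_A0_le:
  assumes no_translate: "\<forall>a\<in>\<alpha>. X0 + a \<notin> G"
  shows "2 * card (G \<union> A0) \<le> P"
proof -
  define K where "K = G \<union> A0"
  define M where "M = lspan (insert X0 K)"
  have "\<forall>y\<in>K. B X0 y = 0"
    unfolding K_def using G_subset_S0 X0_facts(6) by (auto simp: mem_S0_iff)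
  then have "totally_singular n cf ({X0} \<union> K)"
    unfolding K_def using X0_facts(4,5)
    by (intro totally_singular_Un[OF _ totally_singular_G_A0]) (auto simp: totally_singular_def)
  then have ts: "totally_singular n cf M"
    unfolding M_def insert_is_Un[of X0 K] by (rule totally_singular_lspan)
  have lsub: "lsubspace M" unfolding M_def by (rule lsubspace_lspan)
  have fin: "finite M"
    using ts finite_vecs finite_subset unfolding totally_singular_def by blast
  have K_M: "K \<subseteq> M" and "X0 \<in> M"
    unfolding M_def using lspan_superset[of "insert X0 K"] by auto
  then have img: "(\<lambda>y. X0 + y) ` K \<subseteq> M"
    using lsubspace_add[OF lsub] by blast
  have "X0 + k \<notin> K" if "k \<in> K" for k
    using translate_X0_not_in_G_A0[OF no_translate] that unfolding K_def .
  then have "K \<inter> (\<lambda>y. X0 + y) ` K = {}" by blast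
  then have "card K + card ((\<lambda>y. X0 + y) ` K) \<le> card M"
    by (rule card_add_le_of_disjoint[OF fin K_M img])
  then show ?thesis
    using card_totally_singular_le[OF proj_index lsub ts] unfolding card_translate K_def
    by linarith
qed

text \<open>Otherwise the counts force |S| = P and |\<alpha>| + 1 = 2 |G \<inter> A0|, and duality between S
  and A0 then leaves no room for G \<inter> A0, which contains 0.\<close>

lemma translate_X0_meets_G: "\<exists>a\<in>\<alpha>. X0 + a \<in> G"
proof (rule ccontr)
  assume "\<not> ?thesis"
  then have "2 * card (G \<union> A0) \<le> P" by (intro card_G_A0_le) blast
  define GA where "GA = G \<inter> A0"
  define Z where "Z = {a\<in>A0. \<forall>s\<in>S. B s a = 0}"
  have fin: "finite A0" "finite Z" using finite_alpha by (auto simp: Z_def)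
  have lsub: "lsubspace GA" unfolding GA_def by (rule lsubspace_Int[OF lsubspace_G lsubspace_A0])
  obtain c where "c \<in> \<alpha>" "c \<notin> S" by (rule alpha_not_orth_R0)
  then have "2 * card GA \<le> card A0"
    using G_subset_S by (intro lsubspace_proper_card_le[OF lsub lsubspace_A0 fin(1), of c])
      (auto simp: GA_def)
  moreover have "card C1 + 1 \<le> card GA"
    using C1_subset_G_S0 zero_notin_C lsubspace_0[OF lsub] fin
    by (intro card_add_one_le[of GA 0]) (auto simp: GA_def)
  moreover have "card C2 \<le> card G"
    using card_mono[OF finite_G translate_C2_subset_G_S0[THEN subset_trans[OF _ Int_lower1]]]
    by (simp add: card_translate)
  moreover have "card (G \<union> A0) + card GA = card G + card A0"
    using card_Un_Int[OF finite_G fin(1)] by (simp add: GA_def)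
  ultimately have P_eq: "P = 2 * card G + 2 * card GA" and A0_eq: "card A0 = 2 * card GA"
    and GA_pos: "card GA \<ge> 1" and S_eq: "card S = P"
    using \<open>2 * card (G \<union> A0) \<le> P\<close> card_C3_S0_le card_S_eq card_S_le card_C_split card_C
    by linarith+
  have "card S * card Z = card A0 * card G"
    using card_annihilator_duality[OF lsubspace_lspan finite_S lsubspace_A0 fin(1), of n cf]
    unfolding Z_def G_def by (simp add: Int_def conj_commute)
  moreover have "card GA \<le> card Z"
    using S_orth by (intro card_mono[OF fin(2)]) (auto simp: GA_def Z_def mem_G_iff)
  ultimately have "(2 * card G + 2 * card GA) * card GA \<le> 2 * card GA * card G"
    using P_eq A0_eq S_eq by (metis mult_le_mono2)
  then show False using GA_pos by (simp add: algebra_simps)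
qed

end

text \<open>A translate X0 + a in G determines the second generator \<Sigma> of Class B, spanned by a
  and G.\<close>

locale anchored_clique = mixed_clique +
  fixes a :: vec
  assumes a_alpha: "a \<in> \<alpha>" and X0_a_G: "X0 + a \<in> G"
begin

abbreviation "T \<equiv> lspan (insert a G)"

lemma a_notin_S: "a \<notin> S"
proof
  assume "a \<in> S"
  then have "a \<in> G" using a_alpha alpha_orth by (auto simp: mem_G_iff)
  then have "(X0 + a) + a \<in> S" using lsubspace_add[OF lsubspace_G X0_a_G] G_subset_S by blast
  then show False using X0_notin_S by (simp only: add.assoc vec_add_self add_0_right)
qed

lemma translate_a_C2_subset_G: "(\<lambda>y. a + y) ` C2 \<subseteq> G"
proof
  fix z assume "z \<in> (\<lambda>y. a + y) ` C2"
  then obtain X where X: "X \<in> C2" "z = a + X" by blast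
  have "(X0 + X) + (X0 + a) \<in> G"
    using translate_C2_subset_G_S0 X(1) X0_a_G lsubspace_add[OF lsubspace_G] by blast
  moreover have "(X0 + X) + (X0 + a) = z" using X(2) by (simp add: algebra_simps)
  ultimately show "z \<in> G" by simp
qed

lemma translate_a_C2_disjoint_A0: "(\<lambda>y. a + y) ` C2 \<inter> A0 = {}"
proof -
  have "a + X \<notin> A0" if "X \<in> C2" for X
    using that a_alpha lsubspace_add_iff[OF lsubspace_A0, of a X] zero_notin_C alpha_disjoint_Xs
    by blast
  then show ?thesis by blast
qed

lemma anchored_counts:
  "card S = P" "card G = card S0" "card C3 + card S0 = card S"
  "card (C1 \<union> (\<lambda>y. a + y) ` C2) + 1 = card G"
proof -
  have "card (C1 \<union> (\<lambda>y. a + y) ` C2) = card C1 + card C2"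
    using translate_a_C2_disjoint_A0 finite_C
    by (subst card_Un_disjoint) (auto simp: card_translate)
  moreover have "card (C1 \<union> (\<lambda>y. a + y) ` C2) + 1 \<le> card G"
    using C1_subset_G_S0 translate_a_C2_subset_G translate_a_C2_disjoint_A0 zero_notin_C
      lsubspace_0[OF lsubspace_G]
    by (intro card_add_one_le[OF finite_G, of 0]) auto
  moreover have "card G \<le> card S0" using G_subset_S0 by (intro card_mono[OF finite_S0])
  ultimately show "card S = P" "card G = card S0" "card C3 + card S0 = card S"
    "card (C1 \<union> (\<lambda>y. a + y) ` C2) + 1 = card G"
    using card_C3_S0_le card_S_eq card_S_le card_C_split card_C by linarith+
qed

lemma G_eq_S0: "G = S0"
  using G_subset_S0 finite_S0 anchored_counts(2)
  by (intro card_seteq) auto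

lemma C3_eq: "C3 = S - S0"
proof (rule card_seteq)
  show "card (S - S0) \<le> card C3"
    using anchored_counts(3) finite_S0 S0_subset_S
    by (simp add: card_Diff_subset)
qed (use finite_S C3_subset_S_minus_S0 in auto)

lemma G_minus_0_eq: "G - {0} = C1 \<union> (\<lambda>y. a + y) ` C2"
proof (rule card_seteq[symmetric])
  show "card (G - {0}) \<le> card (C1 \<union> (\<lambda>y. a + y) ` C2)"
    using anchored_counts(4) lsubspace_0[OF lsubspace_G] finite_G
    by simp
qed (use finite_G C1_subset_G_S0 translate_a_C2_subset_G translate_a_C2_disjoint_A0
    zero_notin_C in auto)

lemma card_G: "card G = 2 ^ g"
  using anchored_counts(1,2) card_S_eq by simp

lemma T_eq: "T = G \<union> (\<lambda>y. a + y) ` G"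
  using lspan_insert[of a G] lspan_eq[OF lsubspace_G] by simp

lemma card_T: "card T = P"
  using card_lsubspace_insert[OF lsubspace_G finite_G]
    a_notin_S G_subset_S card_G by auto

lemma lspan_G_A0_eq_T: "lspan (G \<union> A0) = T"
proof (rule totally_singular_eq_of_card[OF proj_index lsubspace_lspan])
  show "totally_singular n cf (lspan (G \<union> A0))"
    by (rule totally_singular_lspan[OF totally_singular_G_A0])
  show "T \<subseteq> lspan (G \<union> A0)" using a_alpha by (intro lspan_mono) auto
qed (rule card_T)

lemma totally_singular_T: "totally_singular n cf T"
  using totally_singular_lspan[OF totally_singular_G_A0] lspan_G_A0_eq_T by simp

lemma alpha_subset_T: "\<alpha> \<subseteq> T"
  using lspan_superset[of "G \<union> A0"] lspan_G_A0_eq_T by auto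

lemma T_Int_S: "T \<inter> S = G"
proof -
  have "a + y \<notin> S" if "y \<in> G" for y
    using that G_subset_S a_notin_S lsubspace_add_iff[OF lsubspace_lspan, where x = y and y = a]
    by (auto simp: add.commute)
  then show ?thesis using T_eq G_subset_S by auto
qed

lemma alpha_Int_S_eq: "\<alpha> \<inter> (S - {0}) = C1"
proof
  show "C1 \<subseteq> \<alpha> \<inter> (S - {0})" using C1_subset_G_S0 G_subset_S zero_notin_C by blast
  show "\<alpha> \<inter> (S - {0}) \<subseteq> C1"
  proof
    fix x assume x: "x \<in> \<alpha> \<inter> (S - {0})"
    then have "x \<in> G - {0}" using alpha_orth by (auto simp: mem_G_iff)
    then have "x \<in> C1 \<union> (\<lambda>y. a + y) ` C2" by (simp only: G_minus_0_eq)
    moreover have "x \<notin> (\<lambda>y. a + y) ` C2" using x translate_a_C2_disjoint_A0 by auto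
    ultimately show "x \<in> C1" by (metis UnE)
  qed
qed

lemma T_minus_alpha_S_eq: "(T - {0}) - (\<alpha> \<union> (S - {0})) = C2"
proof
  show "(T - {0}) - (\<alpha> \<union> (S - {0})) \<subseteq> C2"
  proof
    fix z assume "z \<in> (T - {0}) - (\<alpha> \<union> (S - {0}))"
    then have z: "z \<in> T" "z \<noteq> 0" "z \<notin> \<alpha>" "z \<notin> S" by auto
    then have "z \<in> G \<union> (\<lambda>y. a + y) ` G" "z \<notin> G" using T_eq G_subset_S by auto
    then have "z \<in> (\<lambda>y. a + y) ` G" by (metis UnE)
    then obtain y where y: "z = a + y" "y \<in> G" by (rule imageE)
    have "y \<noteq> 0" using y z a_alpha by auto
    then have "y \<in> C1 \<union> (\<lambda>y. a + y) ` C2"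
      unfolding G_minus_0_eq[symmetric] using y(2) by simp
    moreover have "y \<notin> C1"
      using y z a_alpha lsubspace_add[OF lsubspace_A0, of a y] by auto
    ultimately have "y \<in> (\<lambda>y. a + y) ` C2" by (metis UnE)
    then obtain X where "X \<in> C2" "y = a + X" by blast
    then show "z \<in> C2" using y(1) by simp
  qed
  show "C2 \<subseteq> (T - {0}) - (\<alpha> \<union> (S - {0}))"
  proof
    fix X assume X: "X \<in> C2"
    have "a + X \<in> G" using translate_a_C2_subset_G X by blast
    then have "a + (a + X) \<in> T" using T_eq by blast
    then have "X \<in> T" by simp
    moreover have "X \<notin> S"
    proof
      assume "X \<in> S"
      moreover have "X0 + X \<in> S" using translate_C2_subset_G_S0 G_subset_S X by blast
      ultimately have "X + (X0 + X) \<in> S" using lsubspace_add[OF lsubspace_lspan] by blast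
      then show False using X0_notin_S by (simp add: algebra_simps)
    qed
    moreover have "X \<noteq> 0" "X \<notin> \<alpha>" using X zero_notin_C alpha_disjoint_Xs by auto
    ultimately show "X \<in> (T - {0}) - (\<alpha> \<union> (S - {0}))" by blast
  qed
qed

lemma S_minus_T_eq: "(S - {0}) - (T - {0}) = C3"
proof -
  have "0 \<in> T \<inter> S" using T_Int_S lsubspace_0[OF lsubspace_G] by simp
  then have "(S - {0}) - (T - {0}) = S - T \<inter> S" by blast
  also have "\<dots> = S - S0" unfolding T_Int_S by (simp only: G_eq_S0)
  also have "\<dots> = C3" by (rule C3_eq[symmetric])
  finally show ?thesis .
qed

lemma classB_anchored: "classB n cf g \<alpha> C"
  unfolding classB_def
proof (intro exI conjI)
  show "generator n cf g (T - {0})"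
    by (rule generator_of_totally_singular[OF lsubspace_lspan totally_singular_T card_T])
  show "generator n cf g (S - {0})"
    using generator_of_totally_singular[OF lsubspace_lspan totally_singular_S] anchored_counts(1) .
  show "\<alpha> \<subseteq> T - {0}" using alpha_subset_T zero_notin_alpha by blast
  obtain c where "c \<in> \<alpha>" "c \<notin> S" by (rule alpha_not_orth_R0)
  then show "\<not> \<alpha> \<subseteq> S - {0}" by blast
  have "card (G - {0}) = 2 ^ (g - 1 + 1) - 1"
    using card_G g_pos lsubspace_0[OF lsubspace_G] finite_G by simp
  moreover have "(T - {0}) \<inter> (S - {0}) = G - {0}" using T_Int_S by blast
  ultimately show "subspace_dim n ((T - {0}) \<inter> (S - {0})) (g - 1)"
    unfolding subspace_dim_def
    using is_subspace_of_lsubspace[OF lsubspace_G] totally_singular_S G_subset_S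
    by (auto simp: totally_singular_def)
  show "C = \<alpha> \<inter> (S - {0}) \<union> ((T - {0}) - (\<alpha> \<union> (S - {0}))) \<union> ((S - {0}) - (T - {0}))"
    unfolding alpha_Int_S_eq T_minus_alpha_S_eq S_minus_T_eq by (rule C_partition)
qed

end

context big_clique
begin

theorem classA_or_classB: "classA n cf g \<alpha> C \<or> classB n cf g \<alpha> C"
proof (cases "C3 = {}")
  case False
  then obtain X0 R0 where "X0 \<in> C2" "R0 \<in> C3" using type_ii_if_type_iii by blast
  then interpret mixed_clique n cf \<alpha> g s C X0 R0 by unfold_locales
  obtain a where "a \<in> \<alpha>" "X0 + a \<in> G" using translate_X0_meets_G by blast
  then interpret anchored_clique n cf \<alpha> g s C X0 R0 a by unfold_locales
  show ?thesis using classB_anchored by blast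
qed (use classA_if_no_type_iii in blast)

end

theorem lemma5p4:
  fixes n g s :: nat and a :: "nat \<Rightarrow> nat \<Rightarrow> bit"
    and \<alpha> C :: "(nat \<Rightarrow> bit) set"
  assumes "nonsingular n a"
    and "proj_index n a g" and "g \<ge> 1"
    and "s < g"
    and "subspace_dim n \<alpha> s" and "\<alpha> \<subseteq> quadric n a"
    and "clique_s n a \<alpha> C" and "card C = 2 ^ (g + 1) - 1"
  shows "classA n a g \<alpha> C \<or> classB n a g \<alpha> C"
proof -
  have "is_subspace n \<alpha>" "card \<alpha> = 2 ^ (s + 1) - 1"
    using assms(5) unfolding subspace_dim_def by auto
  then interpret big_clique n a \<alpha> g s C
    using assms by unfold_locales auto
  show ?thesis by (rule classA_or_classB)
qed
end
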